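(* Assume the setting below. Let $[q]\in R$. If $\nu(q)$ cannot be written as $\boldsymbol w\otimes\mathbf x$ with $\boldsymbol w\in\mathbb W$ and $\mathbf x\in\mathrm{Im}\mathbb H$, then the action of $T^k$ on $\mathbb{HP}^{k-1}$ is locally free at $[q]$ (i.e. the stabilizer of $[q]$ is finite). Furthermore, the action of $G_{\mathcal S}$ on $R$ is locally free.
   Context: $F$ is a 2-torus, Lie algebra $\mathfrak f\cong\mathbb{R}^2$, lattice $\Lambda\cong\mathbb{Z}^2$. $\mathcal{S}=\{u_1,\dots,u_k\}\subset\Lambda$ is an ordered set generating $\Lambda$, with cyclically consecutive elements linearly independent, each $u_i$ either $(p,0)$ with $p>0$ or with positive second coordinate, $u_1=(p,0)$, and convex ($u_1,\dots,u_k$ outward normals of a convex polygon). Set $v_1=u_1+u_k$, $v_i=u_i-u_{i-1}$ ($2\le i\le k$), $\Omega:\mathbb{R}^k\to\mathfrak f$, $e_i\mapsto v_i$, $\mathfrak g=\ker\Omega$. Conformal data: $\zeta_1,\dots,\zeta_k$ with $|\zeta_i|=1$, $0=\arg\zeta_1<\dots<\arg\zeta_k<2\pi$; $z_i=\zeta_i^{1/2}$, $0\le\arg z_i<\pi$; $\mathbb W=\mathrm{span}\{\mathrm{Re}\boldsymbol z,\mathrm{Im}\boldsymbol z\}\subset(\mathbb R^k)^*$ where $\boldsymbol z=(z_1,\dots,z_k)$; $B^*:(\mathbb R^k)^*\to\mathfrak g^*$ linear with kernel $\mathbb W$. $\mathbb H^k$ has coordinates $q_m=x_m+y_mj$; $\mathcal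 U=\mathbb H^k/\{\pm1\}$; $T^k$ is the diagonal torus $\{(\lambda_1,\dots,\lambda_k):\lambda_m\in U(1)\subset\mathbb C\}$ acting by $q_m\mapsto q_m\lambda_m$, modulo $(-1,\dots,-1)$, acting on $\mathcal U$ and on $\mathbb{HP}^{k-1}$ by $[q_1:\dots:q_k]\mapsto[q_1\lambda_1:\dots:q_k\lambda_k]$; its Lie algebra is $\mathbb R^k$, and $G_{\mathcal S}\subset T^k$ is the $(k-2)$-dimensional subtorus with Lie algebra $\mathfrak g$. $\nu_m(q)=(|x_m|^2-|y_m|^2,\mathrm{Re}(2ix_my_m),\mathrm{Im}(2ix_my_m))\in\mathrm{Im}\mathbb H$, $\nu=(\nu_1,\dots,\nu_k)$ viewed in $(\mathbb R^k)^*\otimes\mathrm{Im}\mathbb H$, $\mu_{\mathcal R}=B^*\circ\nu$, $P=\mu_{\mathcal R}^{-1}(0)\setminus\{0\}\subset\mathcal U$, and $R=\{[q]\in\mathbb{HP}^{k-1}:q\in P\}$. *)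

theory Defs
  imports "HOL-Analysis.Analysis"
begin

text \<open>A quaternion q = x + y j is represented by the pair (x, y) of complex numbers.
  Indices 1..k of the paper are shifted to 0..<k.\<close>

type_synonym quat = "complex \<times> complex"

text \<open>Left multiplication by a quaternion h = a + b j:
  (a + b j)(x + y j) = (a x - b conj y) + (a y + b conj x) j.\<close>
definition qlmul :: "quat \<Rightarrow> quat \<Rightarrow> quat" where
  "qlmul h p = (fst h * fst p - snd h * cnj (snd p), fst h * snd p + snd h * cnj (fst p))"

text \<open>Right multiplication by a complex number l: (x + y j) l = x l + y (cnj l) j.\<close>
definition qrmul :: "quat \<Rightarrow> complex \<Rightarrow> quat" where
  "qrmul p l = (fst p * l, snd p * cnj l)"

text \<open>The three Im H components of nu, as vectors in (R^k)^* (zero outside 0..<k).\<close>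
definition nu1 :: "nat \<Rightarrow> (nat \<Rightarrow> quat) \<Rightarrow> nat \<Rightarrow> real" where
  "nu1 k q m = (if m < k then (cmod (fst (q m)))\<^sup>2 - (cmod (snd (q m)))\<^sup>2 else 0)"
definition nu2 :: "nat \<Rightarrow> (nat \<Rightarrow> quat) \<Rightarrow> nat \<Rightarrow> real" where
  "nu2 k q m = (if m < k then Re (2 * \<i> * fst (q m) * snd (q m)) else 0)"
definition nu3 :: "nat \<Rightarrow> (nat \<Rightarrow> quat) \<Rightarrow> nat \<Rightarrow> real" where
  "nu3 k q m = (if m < k then Im (2 * \<i> * fst (q m) * snd (q m)) else 0)"

text \<open>z_i = zeta_i^(1/2) with 0 <= arg z_i < pi, where t i = arg zeta_i in [0, 2 pi).\<close>
definition zhalf :: "(nat \<Rightarrow> real) \<Rightarrow> nat \<Rightarrow> complex" where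
  "zhalf t i = cis (t i / 2)"

definition Wspace :: "nat \<Rightarrow> (nat \<Rightarrow> real) \<Rightarrow> (nat \<Rightarrow> real) set" where
  "Wspace k t = {w. (\<forall>i\<ge>k. w i = 0) \<and>
      (\<exists>a b. \<forall>i<k. w i = a * Re (zhalf t i) + b * Im (zhalf t i))}"

definition nu_W_tensor :: "nat \<Rightarrow> (nat \<Rightarrow> real) \<Rightarrow> (nat \<Rightarrow> quat) \<Rightarrow> bool" where
  "nu_W_tensor k t q = (\<exists>w\<in>Wspace k t. \<exists>x1 x2 x3 :: real. \<forall>m<k.
      nu1 k q m = w m * x1 \<and> nu2 k q m = w m * x2 \<and> nu3 k q m = w m * x3)"

definition vvec :: "nat \<Rightarrow> (nat \<Rightarrow> int \<times> int) \<Rightarrow> nat \<Rightarrow> int \<times> int" where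
  "vvec k u i = (if i = 0 then (fst (u 0) + fst (u (k - 1)), snd (u 0) + snd (u (k - 1)))
                 else (fst (u i) - fst (u (i - 1)), snd (u i) - snd (u (i - 1))))"

definition Omega :: "nat \<Rightarrow> (nat \<Rightarrow> int \<times> int) \<Rightarrow> (nat \<Rightarrow> real) \<Rightarrow> real \<times> real" where
  "Omega k u \<theta> = ((\<Sum>i<k. \<theta> i * real_of_int (fst (vvec k u i))),
                   (\<Sum>i<k. \<theta> i * real_of_int (snd (vvec k u i))))"

definition liealg_g :: "nat \<Rightarrow> (nat \<Rightarrow> int \<times> int) \<Rightarrow> (nat \<Rightarrow> real) set" where
  "liealg_g k u = {\<theta>. (\<forall>i\<ge>k. \<theta> i = 0) \<and> Omega k u \<theta> = (0, 0)}"

text \<open>The diagonal torus T^k (before quotienting by (-1,...,-1)).\<close>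
definition torusT :: "nat \<Rightarrow> (nat \<Rightarrow> complex) set" where
  "torusT k = {l. (\<forall>m<k. cmod (l m) = 1) \<and> (\<forall>m\<ge>k. l m = 1)}"

text \<open>The subtorus G_S = exp(g) (identity component of its preimage in the tuple group).\<close>
definition G_S :: "nat \<Rightarrow> (nat \<Rightarrow> int \<times> int) \<Rightarrow> (nat \<Rightarrow> complex) set" where
  "G_S k u = {l. \<exists>\<theta>\<in>liealg_g k u. l = (\<lambda>m. cis (\<theta> m))}"

text \<open>Stabilizer in H of the point [q] of HP^(k-1): [q l] = [q] means q_m l_m = h q_m
  for all m and some nonzero quaternion h.\<close>
definition stabHP :: "nat \<Rightarrow> (nat \<Rightarrow> quat) \<Rightarrow> (nat \<Rightarrow> complex) set \<Rightarrow> (nat \<Rightarrow> complex) set" where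
  "stabHP k q H = {l \<in> H. \<exists>h. h \<noteq> (0, 0) \<and> (\<forall>m<k. qrmul (q m) (l m) = qlmul h (q m))}"

text \<open>q in P: q nonzero and mu_R(q) = B^* o nu (q) = 0 (componentwise in Im H).\<close>
definition inP :: "nat \<Rightarrow> ((nat \<Rightarrow> real) \<Rightarrow> 'g::real_vector) \<Rightarrow> (nat \<Rightarrow> quat) \<Rightarrow> bool" where
  "inP k B q = ((\<exists>m<k. q m \<noteq> (0, 0)) \<and>
      B (nu1 k q) = 0 \<and> B (nu2 k q) = 0 \<and> B (nu3 k q) = 0)"

definition det2 :: "int \<times> int \<Rightarrow> int \<times> int \<Rightarrow> int" where
  "det2 a b = fst a * snd b - snd a * fst b"

end

theory Submission
  imports Defs
begin

text \<open>
  Let e = q_m0 \<noteq> 0. If [q l] = [q], i.e. q_m l_m = h q_m for a quaternion h, then left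
  multiplication by h acts on the splitting H = e\<complex> \<oplus> (je)\<complex> by l_m0 and by its conjugate.
  So either l_m0 is real, and then l is the constant \<plusminus>1, or every q_m lies in e\<complex> or (je)\<complex>;
  then \<nu>(q) = w \<otimes> \<nu>(e) for a real vector w, which lies in W because \<mu>_R(q) = 0.
  (A zero q_m would also make \<nu>(q) such a tensor.)

  In the tensor case l_m = \<beta>^(sign w_m). Since w_m = A cos(\<theta>_m/2) + B sin(\<theta>_m/2) with
  increasing half-angles in [0, \<pi>), the signs of w form a step pattern s, ..., s, ?, -s, ..., -s.
  The two equations \<Prod> l_i^(v_i) = 1 cutting out G_S then become two multiplicative equations in
  \<beta> and the free coordinate at the jump, with determinant \<plusminus>2 det(u_(m-1), u_m) \<noteq> 0; hence both
  are roots of unity of bounded order.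
\<close>

definition qj :: "quat \<Rightarrow> quat" where
  "qj p = (- snd p, fst p)"

definition qadd :: "quat \<Rightarrow> quat \<Rightarrow> quat" where
  "qadd p p' = (fst p + fst p', snd p + snd p')"

definition qnu1 :: "quat \<Rightarrow> real" where
  "qnu1 p = (cmod (fst p))\<^sup>2 - (cmod (snd p))\<^sup>2"

definition qnu2 :: "quat \<Rightarrow> real" where
  "qnu2 p = Re (2 * \<i> * fst p * snd p)"

definition qnu3 :: "quat \<Rightarrow> real" where
  "qnu3 p = Im (2 * \<i> * fst p * snd p)"

lemma qlmul_qrmul: "qlmul h (qrmul p c) = qrmul (qlmul h p) c"
  by (simp add: qlmul_def qrmul_def algebra_simps)

lemma qlmul_qadd: "qlmul h (qadd p p') = qadd (qlmul h p) (qlmul h p')"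
  by (simp add: qlmul_def qadd_def algebra_simps)

lemma qlmul_qj: "qlmul h (qj p) = qj (qlmul h p)"
  by (simp add: qlmul_def qj_def algebra_simps)

lemma qj_qrmul: "qj (qrmul p c) = qrmul (qj p) (cnj c)"
  by (simp add: qrmul_def qj_def algebra_simps)

lemma qrmul_qrmul: "qrmul (qrmul p a) b = qrmul p (a * b)"
  by (simp add: qrmul_def algebra_simps)

lemma qrmul_qadd: "qrmul (qadd p p') l = qadd (qrmul p l) (qrmul p' l)"
  by (simp add: qrmul_def qadd_def algebra_simps)

lemma of_real_cmod_sq: "(complex_of_real (cmod z))\<^sup>2 = z * cnj z"
  by (metis complex_norm_square of_real_power)

lemma quat_normsq_nonzero:
  assumes "e \<noteq> (0, 0)"
  shows "fst e * cnj (fst e) + snd e * cnj (snd e) \<noteq> 0"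
proof -
  have "fst e * cnj (fst e) + snd e * cnj (snd e) = of_real ((cmod (fst e))\<^sup>2 + (cmod (snd e))\<^sup>2)"
    by (simp add: of_real_cmod_sq)
  moreover have "(cmod (fst e))\<^sup>2 + (cmod (snd e))\<^sup>2 \<noteq> 0"
    using assms by (cases e) (simp add: add_nonneg_eq_0_iff)
  ultimately show ?thesis
    by (metis of_real_eq_0_iff)
qed

lemma quat_decomp:
  assumes e: "e \<noteq> (0, 0)"
  shows "\<exists>c1 c2. p = qadd (qrmul e c1) (qrmul (qj e) c2)"
proof -
  obtain x y where p: "p = (x, y)" by (cases p)
  obtain x' y' where ee: "e = (x', y')" by (cases e)
  define N where "N = x' * cnj x' + y' * cnj y'"
  have N0: "N \<noteq> 0"
    using quat_normsq_nonzero[OF e] by (simp add: N_def ee)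
  have cN: "cnj N = N" by (simp add: N_def)
  define c1 where "c1 = (cnj x' * x + y' * cnj y) / N"
  define c2 where "c2 = (- cnj y' * x + x' * cnj y) / N"
  have "x' * c1 - y' * c2 = (x' * (cnj x' * x + y' * cnj y) - y' * (- cnj y' * x + x' * cnj y)) / N"
    by (simp add: c1_def c2_def diff_divide_distrib add_divide_distrib algebra_simps)
  also have "x' * (cnj x' * x + y' * cnj y) - y' * (- cnj y' * x + x' * cnj y) = x * N"
    by (simp add: N_def algebra_simps)
  finally have x: "x = x' * c1 - y' * c2" using N0 by simp
  have "y' * cnj c1 + x' * cnj c2 = (y' * (x' * cnj x + cnj y' * y) + x' * (- y' * cnj x + cnj x' * y)) / N"
    using cN by (simp add: c1_def c2_def add_divide_distrib diff_divide_distrib algebra_simps)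
  also have "y' * (x' * cnj x + cnj y' * y) + x' * (- y' * cnj x + cnj x' * y) = y * N"
    by (simp add: N_def algebra_simps)
  finally have "y = y' * cnj c1 + x' * cnj c2" using N0 by simp
  with x show ?thesis
    by (intro exI[of _ c1] exI[of _ c2]) (simp add: p ee qadd_def qrmul_def qj_def)
qed

lemma quat_decomp_unique:
  assumes e: "e \<noteq> (0, 0)"
    and eq: "qadd (qrmul e c1) (qrmul (qj e) c2) = qadd (qrmul e d1) (qrmul (qj e) d2)"
  shows "c1 = d1 \<and> c2 = d2"
proof -
  obtain x' y' where ee: "e = (x', y')" by (cases e)
  define a where "a = c1 - d1"
  define b where "b = c2 - d2"
  from eq have h1: "x' * a - y' * b = 0" and h2: "y' * cnj a + x' * cnj b = 0"
    by (simp_all add: ee qadd_def qrmul_def qj_def a_def b_def algebra_simps)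
  from h2 have h2': "cnj y' * a + cnj x' * b = 0"
    by (metis complex_cnj_add complex_cnj_cnj complex_cnj_mult complex_cnj_zero)
  have "(x' * cnj x' + y' * cnj y') * a = cnj x' * (x' * a - y' * b) + y' * (cnj y' * a + cnj x' * b)"
    by (simp add: algebra_simps)
  also have "\<dots> = 0" using h1 h2' by simp
  finally have "a = 0"
    using quat_normsq_nonzero[OF e] by (simp add: ee)
  with h1 h2' have "y' * b = 0" "cnj x' * b = 0" by auto
  with e ee have "b = 0" by auto
  with \<open>a = 0\<close> show ?thesis by (simp add: a_def b_def)
qed

text \<open>Left multiplication by h acts on e\<complex> by l0 and on (je)\<complex> by cnj l0.\<close>

lemma qlmul_eigen_cases:
  assumes e: "e \<noteq> (0, 0)" and p: "p \<noteq> (0, 0)"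
    and he: "qlmul h e = qrmul e l0" and hp: "qlmul h p = qrmul p l"
  shows "(l = l0 \<and> l = cnj l0) \<or> (l = l0 \<and> (\<exists>c. c \<noteq> 0 \<and> p = qrmul e c))
      \<or> (l = cnj l0 \<and> (\<exists>c. c \<noteq> 0 \<and> p = qrmul (qj e) c))"
proof -
  obtain c1 c2 where pc: "p = qadd (qrmul e c1) (qrmul (qj e) c2)"
    using quat_decomp[OF e] by blast
  have "qlmul h p = qadd (qrmul e (l0 * c1)) (qrmul (qj e) (cnj l0 * c2))"
    unfolding pc qlmul_qadd qlmul_qrmul qlmul_qj he qj_qrmul qrmul_qrmul ..
  moreover have "qrmul p l = qadd (qrmul e (c1 * l)) (qrmul (qj e) (c2 * l))"
    unfolding pc qrmul_qadd qrmul_qrmul ..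
  ultimately have "l0 * c1 = c1 * l \<and> cnj l0 * c2 = c2 * l"
    using quat_decomp_unique[OF e] hp by metis
  then have "c1 = 0 \<or> l = l0" "c2 = 0 \<or> l = cnj l0" by auto
  moreover have "c1 \<noteq> 0 \<or> c2 \<noteq> 0"
    using p pc by (auto simp: qadd_def qrmul_def)
  ultimately show ?thesis
    using pc by (auto simp: qadd_def qrmul_def)
qed

lemma qnu_qrmul:
  "qnu1 (qrmul p c) = (cmod c)\<^sup>2 * qnu1 p"
  "qnu2 (qrmul p c) = (cmod c)\<^sup>2 * qnu2 p"
  "qnu3 (qrmul p c) = (cmod c)\<^sup>2 * qnu3 p"
proof -
  show "qnu1 (qrmul p c) = (cmod c)\<^sup>2 * qnu1 p"
    by (simp add: qnu1_def qrmul_def norm_mult algebra_simps)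
  have E: "2 * \<i> * fst (qrmul p c) * snd (qrmul p c) = of_real ((cmod c)\<^sup>2) * (2 * \<i> * fst p * snd p)"
    by (simp add: qrmul_def of_real_cmod_sq algebra_simps)
  show "qnu2 (qrmul p c) = (cmod c)\<^sup>2 * qnu2 p"
    unfolding qnu2_def E by simp
  show "qnu3 (qrmul p c) = (cmod c)\<^sup>2 * qnu3 p"
    unfolding qnu3_def E by simp
qed

lemma qnu_qj: "qnu1 (qj p) = - qnu1 p" "qnu2 (qj p) = - qnu2 p" "qnu3 (qj p) = - qnu3 p"
  by (simp_all add: qnu1_def qnu2_def qnu3_def qj_def)

lemma qnu_eq_0_imp:
  assumes "qnu1 p = 0" "qnu2 p = 0" "qnu3 p = 0"
  shows "p = (0, 0)"
proof -
  have "2 * \<i> * fst p * snd p = 0"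
    using assms(2,3) unfolding qnu2_def qnu3_def by (simp add: complex_eq_iff)
  then have "fst p = 0 \<or> snd p = 0" by simp
  with assms(1) show ?thesis
    unfolding qnu1_def by (cases p) auto
qed

lemma qnu_zero [simp]: "qnu1 (0, 0) = 0" "qnu2 (0, 0) = 0" "qnu3 (0, 0) = 0"
  by (simp_all add: qnu1_def qnu2_def qnu3_def)

lemma nu_qnu:
  assumes "m < k"
  shows "nu1 k q m = qnu1 (q m)" "nu2 k q m = qnu2 (q m)" "nu3 k q m = qnu3 (q m)"
  using assms by (simp_all add: nu1_def nu2_def nu3_def qnu1_def qnu2_def qnu3_def)

definition W_tensor ::
    "nat \<Rightarrow> (nat \<Rightarrow> real) \<Rightarrow> (nat \<Rightarrow> real) \<Rightarrow> (nat \<Rightarrow> real) \<Rightarrow> (nat \<Rightarrow> real) \<Rightarrow> bool" where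
  "W_tensor k t N1 N2 N3 = (\<exists>w\<in>Wspace k t. \<exists>x1 x2 x3 :: real. \<forall>m<k.
      N1 m = w m * x1 \<and> N2 m = w m * x2 \<and> N3 m = w m * x3)"

lemma nu_W_tensor_iff: "nu_W_tensor k t q \<longleftrightarrow> W_tensor k t (nu1 k q) (nu2 k q) (nu3 k q)"
  by (simp add: nu_W_tensor_def W_tensor_def)

lemma Wspace_scale:
  assumes "w \<in> Wspace k t"
  shows "(\<lambda>m. c * w m) \<in> Wspace k t"
proof -
  obtain a b where "\<forall>i\<ge>k. w i = 0" "\<forall>i<k. w i = a * Re (zhalf t i) + b * Im (zhalf t i)"
    using assms unfolding Wspace_def by blast
  then have "\<forall>i<k. c * w i = (c * a) * Re (zhalf t i) + (c * b) * Im (zhalf t i)"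
    by (simp add: algebra_simps)
  with \<open>\<forall>i\<ge>k. w i = 0\<close> show ?thesis
    unfolding Wspace_def by auto
qed

lemma W_tensor_if_proportional:
  assumes W: "N1 \<in> Wspace k t" "N2 \<in> Wspace k t" "N3 \<in> Wspace k t"
    and X: "X1 \<noteq> 0 \<or> X2 \<noteq> 0 \<or> X3 \<noteq> 0"
    and proportional: "\<forall>m<k. \<exists>r. N1 m = r * X1 \<and> N2 m = r * X2 \<and> N3 m = r * X3"
  shows "W_tensor k t N1 N2 N3"
proof -
  have "W_tensor k t N1 N2 N3"
    if N: "N \<in> Wspace k t" and X0: "X \<noteq> 0"
      and NX: "\<forall>m<k. \<exists>r. N m = r * X \<and> N1 m = r * X1 \<and> N2 m = r * X2 \<and> N3 m = r * X3"
    for N X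
  proof -
    have "\<forall>m<k. N1 m = (N m / X) * X1 \<and> N2 m = (N m / X) * X2 \<and> N3 m = (N m / X) * X3"
      using NX X0 by force
    then show ?thesis
      unfolding W_tensor_def using Wspace_scale[OF N, of "1 / X"]
      by (intro bexI[of _ "\<lambda>m. 1 / X * N m"] exI[of _ X1] exI[of _ X2] exI[of _ X3]) auto
  qed
  then show ?thesis
    using X W proportional by (elim disjE) blast+
qed

text \<open>W is two-dimensional, so its elements vanishing at m0 are the multiples of the single
  element w below.\<close>

lemma W_tensor_if_common_zero:
  assumes W: "N1 \<in> Wspace k t" "N2 \<in> Wspace k t" "N3 \<in> Wspace k t"
    and m0: "m0 < k" "N1 m0 = 0" "N2 m0 = 0" "N3 m0 = 0"
  shows "W_tensor k t N1 N2 N3"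
proof -
  define c where "c = cos (t m0 / 2)"
  define s where "s = sin (t m0 / 2)"
  have cs: "c \<noteq> 0 \<or> s \<noteq> 0"
  proof (rule ccontr)
    assume "\<not> (c \<noteq> 0 \<or> s \<noteq> 0)"
    then have "s\<^sup>2 + c\<^sup>2 = 0" by simp
    then show False
      using sin_cos_squared_add[of "t m0 / 2"] unfolding c_def s_def by simp
  qed
  define w where "w = (\<lambda>i. if i < k then - s * cos (t i / 2) + c * sin (t i / 2) else 0)"
  have "\<forall>i<k. w i = (- s) * Re (zhalf t i) + c * Im (zhalf t i)" "\<forall>i\<ge>k. w i = 0"
    by (simp_all add: w_def zhalf_def)
  then have wW: "w \<in> Wspace k t"
    unfolding Wspace_def by blast
  have multiple: "\<exists>x. \<forall>m<k. N m = w m * x" if N: "N \<in> Wspace k t" and N0: "N m0 = 0" for N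
  proof -
    obtain a b where ab: "\<forall>i<k. N i = a * cos (t i / 2) + b * sin (t i / 2)"
      using N unfolding Wspace_def zhalf_def by auto
    have z: "a * c + b * s = 0"
      using ab m0(1) N0 unfolding c_def s_def by auto
    show ?thesis
    proof (cases "c = 0")
      case True
      with cs z have "s \<noteq> 0" "b = 0" by auto
      with True ab show ?thesis
        by (intro exI[of _ "- a / s"]) (auto simp: w_def field_simps)
    next
      case False
      with z have "a = - (b * s) / c" by (simp add: field_simps)
      with False ab show ?thesis
        by (intro exI[of _ "b / c"]) (auto simp: w_def field_simps)
    qed
  qed
  obtain x1 x2 x3 where "\<forall>m<k. N1 m = w m * x1" "\<forall>m<k. N2 m = w m * x2" "\<forall>m<k. N3 m = w m * x3"
    using multiple[OF W(1) m0(2)] multiple[OF W(2) m0(3)] multiple[OF W(3) m0(4)] by blast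
  with wW show ?thesis
    unfolding W_tensor_def by blast
qed

lemma nu_in_Wspace:
  assumes B_ker: "\<forall>w. (\<forall>i\<ge>k. w i = 0) \<longrightarrow> (B w = 0 \<longleftrightarrow> w \<in> Wspace k t)"
    and P: "inP k B q"
  shows "nu1 k q \<in> Wspace k t" "nu2 k q \<in> Wspace k t" "nu3 k q \<in> Wspace k t"
  using P B_ker unfolding inP_def by (simp_all add: nu1_def nu2_def nu3_def)

lemma stabHP_cases:
  assumes l: "l \<in> stabHP k q H" and m: "m0 < k" "m < k"
    and nz: "q m0 \<noteq> (0, 0)" "q m \<noteq> (0, 0)"
  shows "(l m = l m0 \<and> l m = cnj (l m0))
      \<or> (l m = l m0 \<and> (\<exists>c. c \<noteq> 0 \<and> q m = qrmul (q m0) c))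
      \<or> (l m = cnj (l m0) \<and> (\<exists>c. c \<noteq> 0 \<and> q m = qrmul (qj (q m0)) c))"
proof -
  obtain h where "\<forall>m<k. qrmul (q m) (l m) = qlmul h (q m)"
    using l unfolding stabHP_def by blast
  with m show ?thesis
    by (intro qlmul_eigen_cases[OF nz]) simp_all
qed

lemma stabHP_nonreal_proportional:
  assumes l: "l \<in> stabHP k q H" and m0: "m0 < k"
    and nz: "\<And>m. m < k \<Longrightarrow> q m \<noteq> (0, 0)" and nonreal: "cnj (l m0) \<noteq> l m0"
  shows "\<forall>m<k. \<exists>r. nu1 k q m = r * qnu1 (q m0) \<and> nu2 k q m = r * qnu2 (q m0)
      \<and> nu3 k q m = r * qnu3 (q m0)"
proof (intro allI impI)
  fix m
  assume m: "m < k"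
  from stabHP_cases[OF l m0 m nz[OF m0] nz[OF m]] nonreal
  show "\<exists>r. nu1 k q m = r * qnu1 (q m0) \<and> nu2 k q m = r * qnu2 (q m0) \<and> nu3 k q m = r * qnu3 (q m0)"
  proof (elim disjE conjE exE)
    fix c
    assume "q m = qrmul (q m0) c"
    then show ?thesis
      using m by (intro exI[of _ "(cmod c)\<^sup>2"]) (simp add: nu_qnu qnu_qrmul)
  next
    fix c
    assume "q m = qrmul (qj (q m0)) c"
    then show ?thesis
      using m by (intro exI[of _ "- (cmod c)\<^sup>2"]) (simp add: nu_qnu qnu_qrmul qnu_qj)
  qed auto
qed

lemma complex_unit_real_cases:
  assumes "cmod z = 1" "cnj z = z"
  shows "z = 1 \<or> z = -1"
proof -
  have "Im z = 0"
    using assms(2) by (simp add: complex_eq_iff)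
  with assms(1) have "\<bar>Re z\<bar> = 1"
    by (simp add: cmod_eq_Re)
  with \<open>Im z = 0\<close> show ?thesis
    by (auto simp: complex_eq_iff abs_if split: if_splits)
qed

lemma stabHP_torusT_finite:
  assumes W: "nu1 k q \<in> Wspace k t" "nu2 k q \<in> Wspace k t" "nu3 k q \<in> Wspace k t"
    and P: "inP k B q" and not_tensor: "\<not> nu_W_tensor k t q"
  shows "finite (stabHP k q (torusT k))"
proof -
  have nz: "q m \<noteq> (0, 0)" if "m < k" for m
  proof
    assume "q m = (0, 0)"
    then have "W_tensor k t (nu1 k q) (nu2 k q) (nu3 k q)"
      using that by (intro W_tensor_if_common_zero[OF W that]) (simp_all add: nu_qnu)
    with not_tensor show False
      by (simp add: nu_W_tensor_iff)
  qed
  obtain m0 where m0: "m0 < k"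
    using P unfolding inP_def by blast
  define e where "e = q m0"
  have e_nu: "qnu1 e \<noteq> 0 \<or> qnu2 e \<noteq> 0 \<or> qnu3 e \<noteq> 0"
    using qnu_eq_0_imp[of e] nz[OF m0] unfolding e_def by argo
  have "l \<in> (\<lambda>c m. if m < k then c else 1) ` {1, -1}" if l: "l \<in> stabHP k q (torusT k)" for l
  proof -
    have real: "cnj (l m0) = l m0"
    proof (rule ccontr)
      assume "cnj (l m0) \<noteq> l m0"
      with stabHP_nonreal_proportional[OF l m0 nz] not_tensor W_tensor_if_proportional[OF W e_nu]
      show False
        by (simp add: nu_W_tensor_iff e_def)
    qed
    have const: "l m = l m0" if "m < k" for m
      using stabHP_cases[OF l m0 that nz[OF m0] nz[OF that]] real by auto
    have "l m0 = 1 \<or> l m0 = -1"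
      using l m0 real complex_unit_real_cases unfolding stabHP_def torusT_def by blast
    moreover have "l = (\<lambda>m. if m < k then l m0 else 1)"
    proof
      fix m
      show "l m = (if m < k then l m0 else 1)"
        using l const unfolding stabHP_def torusT_def by (cases "m < k") auto
    qed
    ultimately show ?thesis by blast
  qed
  then have "stabHP k q (torusT k) \<subseteq> (\<lambda>c m. if m < k then c else 1) ` {1, -1}"
    by blast
  then show ?thesis
    by (rule finite_subset) simp
qed

definition isgn :: "real \<Rightarrow> int" where
  "isgn x = (if x > 0 then 1 else if x < 0 then -1 else 0)"

lemma isgn_eq_0_iff [simp]: "isgn x = 0 \<longleftrightarrow> x = 0"
  by (simp add: isgn_def)

lemma isgn_nonzero_cases: "x \<noteq> 0 \<Longrightarrow> isgn x = 1 \<or> isgn x = -1"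
  by (simp add: isgn_def)

lemma isgn_uminus: "isgn (- x) = - isgn x"
  by (simp add: isgn_def)

lemma isgn_mult_pos: "a > 0 \<Longrightarrow> isgn (a * x) = isgn x"
  by (simp add: isgn_def zero_less_mult_iff mult_less_0_iff)

lemma isgn_sin:
  assumes "- pi < y" "y < pi"
  shows "isgn (sin y) = isgn y"
proof (cases y "0 :: real" rule: linorder_cases)
  case less
  then have "sin (- y) > 0"
    using assms by (intro sin_gt_zero) auto
  with less show ?thesis by (simp add: isgn_def)
next
  case greater
  then have "sin y > 0"
    using assms by (intro sin_gt_zero) auto
  with greater show ?thesis by (simp add: isgn_def)
qed simp

text \<open>On [0, \<pi>) a sinusoid A cos x + B sin x changes sign at most once, at a threshold \<tau>:
  writing it as r sin (c - x) with c \<in> [0, \<pi>), the argument c - x stays in (-\<pi>, \<pi>).\<close>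

lemma sinusoid_isgn_threshold:
  assumes "A \<noteq> 0 \<or> B \<noteq> 0"
  obtains s :: int and \<tau> where "s = 1 \<or> s = -1"
    "\<And>x. 0 \<le> x \<Longrightarrow> x < pi \<Longrightarrow> isgn (A * cos x + B * sin x) = s * isgn (\<tau> - x)"
proof -
  have normalized: "\<exists>\<tau>. \<forall>x. 0 \<le> x \<longrightarrow> x < pi \<longrightarrow> isgn (A * cos x + B * sin x) = isgn (\<tau> - x)"
    if AB: "A > 0 \<or> (A = 0 \<and> B < 0)" for A B :: real
  proof -
    define r where "r = sqrt (A\<^sup>2 + B\<^sup>2)"
    have pos: "A\<^sup>2 + B\<^sup>2 > 0"
      using AB by (auto intro: add_pos_nonneg add_nonneg_pos)
    have r0: "r > 0"
      unfolding r_def using pos by (rule real_sqrt_gt_zero)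
    have r2: "r\<^sup>2 = A\<^sup>2 + B\<^sup>2"
      unfolding r_def using pos by simp
    have "(- B / r)\<^sup>2 + (A / r)\<^sup>2 = (A\<^sup>2 + B\<^sup>2) / r\<^sup>2"
      by (simp add: power_divide add_divide_distrib)
    also have "\<dots> = 1"
      unfolding r2 using pos by (intro divide_self) linarith
    finally have "(- B / r)\<^sup>2 + (A / r)\<^sup>2 = 1" .
    then obtain c where c: "0 \<le> c" "c \<le> pi" "- B / r = cos c" "A / r = sin c"
      using sincos_total_pi[of "A / r" "- B / r"] AB r0 by auto
    have "A / r = sin c" "B / r = - cos c"
      using c(3,4) by simp_all
    then have A: "A = r * sin c" and B: "B = - r * cos c"
      using r0 by (simp_all add: divide_eq_eq)
    have "c \<noteq> pi"
    proof
      assume "c = pi"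
      with A B have "A = 0" "B = r" by simp_all
      with AB r0 show False by simp
    qed
    have "isgn (A * cos x + B * sin x) = isgn (c - x)" if x: "0 \<le> x" "x < pi" for x
    proof -
      have "A * cos x + B * sin x = r * sin (c - x)"
        by (simp add: A B sin_diff algebra_simps)
      then show ?thesis
        using isgn_mult_pos[OF r0] isgn_sin[of "c - x"] c x \<open>c \<noteq> pi\<close> by simp
    qed
    then show ?thesis by blast
  qed
  show ?thesis
  proof (cases "A > 0 \<or> (A = 0 \<and> B < 0)")
    case True
    then obtain \<tau> where "\<forall>x. 0 \<le> x \<longrightarrow> x < pi \<longrightarrow> isgn (A * cos x + B * sin x) = isgn (\<tau> - x)"
      using normalized by blast
    then show ?thesis
      by (intro that[where s = 1 and \<tau> = \<tau>]) simp_all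
  next
    case False
    with assms have "- A > 0 \<or> (- A = 0 \<and> - B < 0)" by auto
    then obtain \<tau> where
      \<tau>: "\<forall>x. 0 \<le> x \<longrightarrow> x < pi \<longrightarrow> isgn (- A * cos x + - B * sin x) = isgn (\<tau> - x)"
      using normalized by blast
    have "isgn (A * cos x + B * sin x) = - 1 * isgn (\<tau> - x)" if "0 \<le> x" "x < pi" for x
    proof -
      have "isgn (A * cos x + B * sin x) = - isgn (- (A * cos x + B * sin x))"
        by (simp only: isgn_uminus minus_minus)
      also have "- (A * cos x + B * sin x) = - A * cos x + - B * sin x"
        by simp
      finally show ?thesis
        using \<tau> that by simp
    qed
    then show ?thesis
      by (intro that[where s = "-1" and \<tau> = \<tau>]) simp_all
  qed
qed

lemma threshold_isgn_pattern:
  fixes x :: "nat \<Rightarrow> real"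
  assumes "0 < k" and mono: "\<And>i j. i < j \<Longrightarrow> j < k \<Longrightarrow> x i < x j"
  obtains m1 where "m1 < k" "\<And>i. i < k \<Longrightarrow> i \<noteq> m1 \<Longrightarrow> isgn (\<tau> - x i) = (if i < m1 then 1 else -1)"
proof -
  define S where "S = {i. i < k \<and> x i \<le> \<tau>}"
  define m1 where "m1 = Max (insert 0 S)"
  have "finite S"
    by (simp add: S_def)
  then have m1: "m1 \<in> insert 0 S" and max: "\<forall>j\<in>S. j \<le> m1"
    unfolding m1_def by (intro Max_in, simp_all)
  have "isgn (\<tau> - x i) = (if i < m1 then 1 else -1)" if i: "i < k" "i \<noteq> m1" for i
  proof (cases "i < m1")
    case True
    then have "m1 \<in> S"
      using m1 by auto
    with True mono[of i m1] show ?thesis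
      by (simp add: S_def isgn_def)
  next
    case False
    with i max have "i \<notin> S"
      by force
    with i False show ?thesis
      by (simp add: S_def isgn_def)
  qed
  moreover have "m1 < k"
    using m1 \<open>0 < k\<close> by (auto simp: S_def)
  ultimately show ?thesis
    using that by blast
qed

text \<open>The value 0 at m1 is a placeholder: the coordinate at the jump is a separate unknown.\<close>

definition step_sign :: "nat \<Rightarrow> int \<Rightarrow> nat \<Rightarrow> int" where
  "step_sign m1 s i = (if i < m1 then s else if i = m1 then 0 else - s)"

lemma Wspace_isgn_step:
  assumes w: "w \<in> Wspace k t" and m0: "m0 < k" "w m0 \<noteq> 0"
    and trange: "\<forall>i<k. 0 \<le> t i \<and> t i < 2 * pi"
    and tmono: "\<forall>i j. i < j \<and> j < k \<longrightarrow> t i < t j"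
  obtains m1 s where "m1 < k" "s = 1 \<or> s = -1" "\<And>i. i < k \<Longrightarrow> i \<noteq> m1 \<Longrightarrow> isgn (w i) = step_sign m1 s i"
proof -
  obtain A B where AB: "\<forall>i<k. w i = A * cos (t i / 2) + B * sin (t i / 2)"
    using w unfolding Wspace_def zhalf_def by auto
  with m0 have "A \<noteq> 0 \<or> B \<noteq> 0" by auto
  then obtain s :: int and \<tau> where s: "s = 1 \<or> s = -1"
    and sign: "\<And>x. 0 \<le> x \<Longrightarrow> x < pi \<Longrightarrow> isgn (A * cos x + B * sin x) = s * isgn (\<tau> - x)"
    using sinusoid_isgn_threshold by blast
  obtain m1 where m1: "m1 < k"
    and pattern: "\<And>i. i < k \<Longrightarrow> i \<noteq> m1 \<Longrightarrow> isgn (\<tau> - t i / 2) = (if i < m1 then 1 else -1)"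
    using threshold_isgn_pattern[of k "\<lambda>i. t i / 2" \<tau>] m0 tmono by auto
  have "isgn (w i) = step_sign m1 s i" if "i < k" "i \<noteq> m1" for i
  proof -
    have "0 \<le> t i / 2" "t i / 2 < pi"
      using trange that by auto
    then have "isgn (w i) = s * isgn (\<tau> - t i / 2)"
      using AB sign that by simp
    then show ?thesis
      using pattern[OF that] that(2) by (simp add: step_sign_def)
  qed
  with m1 s that show ?thesis by blast
qed

definition vcoord :: "nat \<Rightarrow> (nat \<Rightarrow> int) \<Rightarrow> nat \<Rightarrow> int" where
  "vcoord k f i = (if i = 0 then f 0 + f (k - 1) else f i - f (i - 1))"

lemma vvec_vcoord:
  "fst (vvec k u i) = vcoord k (\<lambda>i. fst (u i)) i"
  "snd (vvec k u i) = vcoord k (\<lambda>i. snd (u i)) i"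
  by (simp_all add: vvec_def vcoord_def)

lemma sum_vcoord_prefix:
  assumes "n \<le> k"
  shows "(\<Sum>i<k. if i < n then vcoord k f i else 0) = (if n = 0 then 0 else f (k - 1) + f (n - 1))"
proof -
  have telescope: "(\<Sum>i<Suc n. vcoord k f i) = f (k - 1) + f n" for n
    by (induction n) (auto simp: vcoord_def)
  have "(\<Sum>i<k. if i < n then vcoord k f i else 0) = (\<Sum>i\<in>{..<k} \<inter> {..<n}. vcoord k f i)"
    by (simp add: sum.inter_restrict)
  also have "{..<k} \<inter> {..<n} = {..<n}"
    using assms by auto
  finally show ?thesis
    using telescope[of "n - 1"] by (cases n) auto
qed

lemma sum_step_sign_vcoord:
  assumes "m1 < k"
  shows "(\<Sum>i<k. step_sign m1 s i * vcoord k f i)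
       = s * (if m1 = 0 then f 0 - f (k - 1) else f (m1 - 1) + f m1)"
proof -
  let ?prefix = "\<lambda>n. \<Sum>i<k. if i < n then vcoord k f i else 0"
  have "(\<Sum>i<k. step_sign m1 s i * vcoord k f i)
      = (\<Sum>i<k. s * (if i < m1 then vcoord k f i else 0)
          + s * (if i < Suc m1 then vcoord k f i else 0) - s * (if i < k then vcoord k f i else 0))"
    by (rule sum.cong) (auto simp: step_sign_def)
  also have "\<dots> = s * ?prefix m1 + s * ?prefix (Suc m1) - s * ?prefix k"
    by (simp add: sum_distrib_left sum.distrib sum_subtractf)
  also have "\<dots> = s * (if m1 = 0 then f 0 - f (k - 1) else f (m1 - 1) + f m1)"
    using assms sum_vcoord_prefix[of m1 k f] sum_vcoord_prefix[of "Suc m1" k f]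
      sum_vcoord_prefix[of k k f]
    by (simp add: vcoord_def algebra_simps)
  finally show ?thesis .
qed

text \<open>The two relations defining exp(g), restricted to a step sign pattern with jump at m1,
  form a 2 \<times> 2 system whose determinant is \<plusminus>2 det(u_{m1-1}, u_{m1}) (indices mod k).\<close>

lemma step_sign_vvec_det_nonzero:
  assumes cyc_indep: "\<forall>i<k. det2 (u i) (u ((i + 1) mod k)) \<noteq> 0"
    and m1: "m1 < k" and s: "s = 1 \<or> s = -1"
  shows "(\<Sum>i<k. step_sign m1 s i * fst (vvec k u i)) * snd (vvec k u m1)
       - (\<Sum>i<k. step_sign m1 s i * snd (vvec k u i)) * fst (vvec k u m1) \<noteq> 0"
proof (cases "m1 = 0")
  case True
  have "(k - 1 + 1) mod k = 0"
    using m1 by simp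
  then have "det2 (u (k - 1)) (u 0) \<noteq> 0"
    using cyc_indep[rule_format, of "k - 1"] m1 by simp
  with True s show ?thesis
    unfolding vvec_vcoord sum_step_sign_vcoord[OF m1]
    by (auto simp: vcoord_def det2_def algebra_simps)
next
  case False
  then have "det2 (u (m1 - 1)) (u m1) \<noteq> 0"
    using cyc_indep[rule_format, of "m1 - 1"] m1 by simp
  with False s show ?thesis
    unfolding vvec_vcoord sum_step_sign_vcoord[OF m1]
    by (auto simp: vcoord_def det2_def algebra_simps)
qed

lemma prod_cis: "(\<Prod>i\<in>A. cis (f i)) = cis (\<Sum>i\<in>A. f i)"
  by (induction A rule: infinite_finite_induct) (auto simp: cis_mult)

lemma prod_power_int: "(z :: complex) \<noteq> 0 \<Longrightarrow> (\<Prod>i\<in>A. z powi g i) = z powi (\<Sum>i\<in>A. g i)"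
  by (induction A rule: infinite_finite_induct) (auto simp: power_int_add)

lemma power_int_eq_1_imp_power_eq_1:
  assumes "(z :: complex) powi d = 1" "d \<noteq> 0"
  shows "z ^ nat \<bar>d\<bar> = 1"
proof (cases "d \<ge> 0")
  case True
  then show ?thesis
    using assms by (simp add: power_int_def)
next
  case False
  then have "inverse z ^ nat (- d) = 1"
    using assms by (simp add: power_int_def)
  with False show ?thesis
    by (simp add: power_inverse)
qed

text \<open>Cramer's rule in multiplicative form.\<close>

lemma power_int_det_eq_1:
  fixes \<beta> \<gamma> :: complex
  assumes nz: "\<beta> \<noteq> 0" "\<gamma> \<noteq> 0"
    and e1: "\<beta> powi a1 * \<gamma> powi b1 = 1" and e2: "\<beta> powi a2 * \<gamma> powi b2 = 1"
  shows "\<beta> powi (a1 * b2 - a2 * b1) = 1" "\<gamma> powi (a1 * b2 - a2 * b1) = 1"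
proof -
  have "\<beta> powi (a1 * b2) * \<gamma> powi (b1 * b2) = 1"
    using arg_cong[OF e1, of "\<lambda>z. z powi b2"] by (simp add: power_int_mult_distrib power_int_mult)
  moreover have "\<beta> powi (a2 * b1) * \<gamma> powi (b1 * b2) = 1"
    using arg_cong[OF e2, of "\<lambda>z. z powi b1"]
    by (simp add: power_int_mult_distrib mult.commute flip: power_int_mult)
  ultimately have "\<beta> powi (a1 * b2) = \<beta> powi (a2 * b1)"
    using nz by (metis mult_right_cancel power_int_eq_0_iff)
  then show "\<beta> powi (a1 * b2 - a2 * b1) = 1"
    using nz by (simp add: power_int_diff)
  have "\<beta> powi (a1 * a2) * \<gamma> powi (b1 * a2) = 1"
    using arg_cong[OF e1, of "\<lambda>z. z powi a2"] by (simp add: power_int_mult_distrib power_int_mult)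
  moreover have "\<beta> powi (a1 * a2) * \<gamma> powi (b2 * a1) = 1"
    using arg_cong[OF e2, of "\<lambda>z. z powi a1"]
    by (simp add: power_int_mult_distrib mult.commute flip: power_int_mult)
  ultimately have "\<gamma> powi (b1 * a2) = \<gamma> powi (b2 * a1)"
    using nz by (metis mult_left_cancel power_int_eq_0_iff)
  then show "\<gamma> powi (a1 * b2 - a2 * b1) = 1"
    using nz by (simp add: power_int_diff mult.commute)
qed

lemma G_S_subset_torusT: "G_S k u \<subseteq> torusT k"
  unfolding G_S_def torusT_def liealg_g_def by auto

lemma G_S_prod_vvec:
  assumes "l \<in> G_S k u"
  shows "(\<Prod>i<k. l i powi fst (vvec k u i)) = 1" "(\<Prod>i<k. l i powi snd (vvec k u i)) = 1"
proof -
  obtain \<theta> where \<theta>: "\<theta> \<in> liealg_g k u" and l: "l = (\<lambda>m. cis (\<theta> m))"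
    using assms unfolding G_S_def by blast
  from \<theta> have "Omega k u \<theta> = (0, 0)"
    unfolding liealg_g_def by blast
  then show "(\<Prod>i<k. l i powi fst (vvec k u i)) = 1" "(\<Prod>i<k. l i powi snd (vvec k u i)) = 1"
    by (simp_all add: l Omega_def cis_power_int prod_cis mult.commute)
qed

lemma prod_power_int_step_sign:
  fixes \<beta> :: complex
  assumes "\<beta> \<noteq> 0" and "m1 < k" and l: "\<forall>i<k. i \<noteq> m1 \<longrightarrow> l i = \<beta> powi step_sign m1 s i"
  shows "(\<Prod>i<k. l i powi g i) = \<beta> powi (\<Sum>i<k. step_sign m1 s i * g i) * l m1 powi g m1"
proof -
  have "(\<Prod>i<k. l i powi g i)
      = (\<Prod>i<k. \<beta> powi (step_sign m1 s i * g i) * (if i = m1 then l m1 powi g i else 1))"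
    using l by (intro prod.cong) (auto simp: step_sign_def power_int_mult)
  also have "\<dots> = \<beta> powi (\<Sum>i<k. step_sign m1 s i * g i) * l m1 powi g m1"
    using assms by (simp add: prod.distrib prod_power_int prod.delta)
  finally show ?thesis .
qed

lemma G_S_finite_step_sign:
  assumes cyc_indep: "\<forall>i<k. det2 (u i) (u ((i + 1) mod k)) \<noteq> 0"
    and m1: "m1 < k" and s: "s = 1 \<or> s = -1"
  shows "finite {l \<in> G_S k u. \<exists>\<beta>. \<beta> \<noteq> 0 \<and> (\<forall>i<k. i \<noteq> m1 \<longrightarrow> l i = \<beta> powi step_sign m1 s i)}"
    (is "finite ?L")
proof -
  define D1 where "D1 = (\<Sum>i<k. step_sign m1 s i * fst (vvec k u i))"
  define D2 where "D2 = (\<Sum>i<k. step_sign m1 s i * snd (vvec k u i))"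
  define d where "d = D1 * snd (vvec k u m1) - D2 * fst (vvec k u m1)"
  have d0: "d \<noteq> 0"
    using step_sign_vvec_det_nonzero[OF cyc_indep m1 s] by (simp add: d_def D1_def D2_def)
  define n where "n = nat \<bar>d\<bar>"
  have "0 < n"
    using d0 by (simp add: n_def)
  define F :: "complex \<times> complex \<Rightarrow> nat \<Rightarrow> complex" where
    "F = (\<lambda>(\<beta>, \<gamma>) m. if m < k then (if m = m1 then \<gamma> else \<beta> powi step_sign m1 s m) else 1)"
  have "?L \<subseteq> F ` ({\<beta>. \<beta> ^ n = 1} \<times> {\<gamma>. \<gamma> ^ n = 1})"
  proof
    fix l
    assume "l \<in> ?L"
    then obtain \<beta> where lG: "l \<in> G_S k u" and \<beta>0: "\<beta> \<noteq> 0"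
      and l\<beta>: "\<forall>i<k. i \<noteq> m1 \<longrightarrow> l i = \<beta> powi step_sign m1 s i"
      by blast
    obtain \<theta> where \<theta>: "\<theta> \<in> liealg_g k u" and l: "l = (\<lambda>m. cis (\<theta> m))"
      using lG unfolding G_S_def by blast
    define \<gamma> where "\<gamma> = l m1"
    have \<gamma>0: "\<gamma> \<noteq> 0"
      by (simp add: \<gamma>_def l)
    from G_S_prod_vvec[OF lG] prod_power_int_step_sign[OF \<beta>0 m1 l\<beta>]
    have "\<beta> powi D1 * \<gamma> powi fst (vvec k u m1) = 1" "\<beta> powi D2 * \<gamma> powi snd (vvec k u m1) = 1"
      by (simp_all add: D1_def D2_def \<gamma>_def)
    from power_int_det_eq_1[OF \<beta>0 \<gamma>0 this] have "\<beta> ^ n = 1" "\<gamma> ^ n = 1"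
      using d0 power_int_eq_1_imp_power_eq_1 unfolding d_def n_def by blast+
    moreover have "l = F (\<beta>, \<gamma>)"
    proof
      fix m
      show "l m = F (\<beta>, \<gamma>) m"
        using l\<beta> \<theta> by (cases "m < k") (auto simp: F_def \<gamma>_def l liealg_g_def)
    qed
    ultimately show "l \<in> F ` ({\<beta>. \<beta> ^ n = 1} \<times> {\<gamma>. \<gamma> ^ n = 1})"
      by blast
  qed
  moreover have "finite ({\<beta> :: complex. \<beta> ^ n = 1} \<times> {\<gamma> :: complex. \<gamma> ^ n = 1})"
    using \<open>0 < n\<close> by (intro finite_cartesian_product finite_roots_unity) simp_all
  ultimately show ?thesis
    by (rule finite_surj[rotated])
qed

lemma stabHP_mono: "H \<subseteq> H' \<Longrightarrow> stabHP k q H \<subseteq> stabHP k q H'"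
  unfolding stabHP_def by blast

lemma unit_cnj_eq_power_int:
  assumes "cmod z = 1" "a = 1 \<or> a = -1" "b = 1 \<or> b = -1"
  shows "(if a = b then z else cnj z) = (if b = 1 then z else cnj z) powi a"
proof -
  have "inverse z = cnj z"
    using assms(1) complex_norm_square[of z] by (simp add: inverse_unique)
  then have "inverse (cnj z) = z"
    by (metis complex_cnj_cnj complex_cnj_inverse)
  with \<open>inverse z = cnj z\<close> assms(2,3) show ?thesis
    by (auto simp: power_int_minus)
qed

lemma stabHP_tensor_isgn:
  assumes wx: "\<forall>m<k. nu1 k q m = w m * x1 \<and> nu2 k q m = w m * x2 \<and> nu3 k q m = w m * x3"
    and l: "l \<in> stabHP k q H" and m0: "m0 < k" "q m0 \<noteq> (0, 0)" and m: "m < k" "w m \<noteq> 0"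
  shows "l m = (if isgn (w m) = isgn (w m0) then l m0 else cnj (l m0))"
proof -
  have X: "x1 \<noteq> 0 \<or> x2 \<noteq> 0 \<or> x3 \<noteq> 0"
    using wx m0 qnu_eq_0_imp[of "q m0"] by (auto simp: nu_qnu)
  have cancel: "w m = r * w m0" if "qnu1 (q m) = r * qnu1 (q m0) \<and> qnu2 (q m) = r * qnu2 (q m0)
      \<and> qnu3 (q m) = r * qnu3 (q m0)" for r
    using that wx m m0 X by (auto simp: nu_qnu)
  have qm: "q m \<noteq> (0, 0)"
    using wx m X by (auto simp: nu_qnu)
  from stabHP_cases[OF l m0(1) m(1) m0(2) qm] show ?thesis
  proof (elim disjE conjE exE)
    fix c
    assume "l m = l m0" "c \<noteq> 0" "q m = qrmul (q m0) c"
    moreover from this have "w m = (cmod c)\<^sup>2 * w m0"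
      by (intro cancel) (simp add: qnu_qrmul)
    ultimately show ?thesis
      by (simp add: isgn_mult_pos)
  next
    fix c
    assume "l m = cnj (l m0)" "c \<noteq> 0" "q m = qrmul (qj (q m0)) c"
    moreover from this have "w m = - (cmod c)\<^sup>2 * w m0"
      by (intro cancel) (simp add: qnu_qrmul qnu_qj)
    ultimately show ?thesis
      using m(2) by (auto simp: isgn_mult_pos isgn_uminus)
  qed auto
qed

lemma stabHP_G_S_finite_if_tensor:
  assumes cyc_indep: "\<forall>i<k. det2 (u i) (u ((i + 1) mod k)) \<noteq> 0"
    and trange: "\<forall>i<k. 0 \<le> t i \<and> t i < 2 * pi"
    and tmono: "\<forall>i j. i < j \<and> j < k \<longrightarrow> t i < t j"
    and P: "inP k B q" and tensor: "nu_W_tensor k t q"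
  shows "finite (stabHP k q (G_S k u))"
proof -
  obtain w x1 x2 x3 where wW: "w \<in> Wspace k t"
    and wx: "\<forall>m<k. nu1 k q m = w m * x1 \<and> nu2 k q m = w m * x2 \<and> nu3 k q m = w m * x3"
    using tensor unfolding nu_W_tensor_def by blast
  obtain m0 where m0: "m0 < k" "q m0 \<noteq> (0, 0)"
    using P unfolding inP_def by blast
  have wm0: "w m0 \<noteq> 0"
    using wx m0 qnu_eq_0_imp[of "q m0"] by (auto simp: nu_qnu)
  obtain m1 s where m1: "m1 < k" and s: "s = 1 \<or> s = -1"
    and step: "\<And>i. i < k \<Longrightarrow> i \<noteq> m1 \<Longrightarrow> isgn (w i) = step_sign m1 s i"
    using Wspace_isgn_step[OF wW m0(1) wm0 trange tmono] by blast
  have "stabHP k q (G_S k u)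
      \<subseteq> {l \<in> G_S k u. \<exists>\<beta>. \<beta> \<noteq> 0 \<and> (\<forall>i<k. i \<noteq> m1 \<longrightarrow> l i = \<beta> powi step_sign m1 s i)}"
  proof safe
    fix l
    assume l: "l \<in> stabHP k q (G_S k u)"
    then show lG: "l \<in> G_S k u"
      unfolding stabHP_def by blast
    then have unit: "cmod (l m0) = 1"
      using G_S_subset_torusT m0 unfolding torusT_def by blast
    define \<beta> where "\<beta> = (if isgn (w m0) = 1 then l m0 else cnj (l m0))"
    have "l i = \<beta> powi step_sign m1 s i" if "i < k" "i \<noteq> m1" for i
    proof -
      have "w i \<noteq> 0"
        using step[OF that] s that(2) by (auto simp: step_sign_def isgn_def split: if_splits)
      with that have "l i = (if isgn (w i) = isgn (w m0) then l m0 else cnj (l m0))"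
        by (intro stabHP_tensor_isgn[OF wx l m0])
      also have "\<dots> = \<beta> powi isgn (w i)"
        unfolding \<beta>_def
        using unit isgn_nonzero_cases[OF \<open>w i \<noteq> 0\<close>] isgn_nonzero_cases[OF wm0]
        by (rule unit_cnj_eq_power_int)
      finally show ?thesis
        using step[OF that] by simp
    qed
    moreover have "\<beta> \<noteq> 0"
      using unit by (auto simp: \<beta>_def)
    ultimately show "\<exists>\<beta>. \<beta> \<noteq> 0 \<and> (\<forall>i<k. i \<noteq> m1 \<longrightarrow> l i = \<beta> powi step_sign m1 s i)"
      by blast
  qed
  then show ?thesis
    using G_S_finite_step_sign[OF cyc_indep m1 s] by (rule finite_subset)
qed

theorem mainTheorem5:
  fixes k :: nat
    and u :: "nat \<Rightarrow> int \<times> int"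
    and \<zeta> :: "nat \<Rightarrow> complex"
    and t :: "nat \<Rightarrow> real"
    and B :: "(nat \<Rightarrow> real) \<Rightarrow> 'g::real_vector"
  assumes gen: "\<forall>a b :: int. \<exists>c :: nat \<Rightarrow> int.
              a = (\<Sum>i<k. c i * fst (u i)) \<and> b = (\<Sum>i<k. c i * snd (u i))"
    and cyc_indep: "\<forall>i<k. det2 (u i) (u ((i + 1) mod k)) \<noteq> 0"
    and halfplane: "\<forall>i<k. (fst (u i) > 0 \<and> snd (u i) = 0) \<or> snd (u i) > 0"
    and u1: "fst (u 0) > 0 \<and> snd (u 0) = 0"
    and convex: "\<forall>i. i + 1 < k \<longrightarrow> det2 (u i) (u (i + 1)) > 0"
    and zeta: "\<forall>i<k. \<zeta> i = cis (t i) \<and> 0 \<le> t i \<and> t i < 2 * pi"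
    and t0: "t 0 = 0"
    and tmono: "\<forall>i j. i < j \<and> j < k \<longrightarrow> t i < t j"
    and B_add: "\<forall>w w'. B (\<lambda>i. w i + w' i) = B w + B w'"
    and B_scale: "\<forall>(a::real) w. B (\<lambda>i. a * w i) = a *\<^sub>R B w"
    and B_ker: "\<forall>w. (\<forall>i\<ge>k. w i = 0) \<longrightarrow> (B w = 0 \<longleftrightarrow> w \<in> Wspace k t)"
  shows "(\<forall>q. inP k B q \<and> \<not> nu_W_tensor k t q \<longrightarrow> finite (stabHP k q (torusT k)))
       \<and> (\<forall>q. inP k B q \<longrightarrow> finite (stabHP k q (G_S k u)))"
proof -
  have trange: "\<forall>i<k. 0 \<le> t i \<and> t i < 2 * pi"
    using zeta by blast
  have torus: "finite (stabHP k q (torusT k))" if "inP k B q" "\<not> nu_W_tensor k t q" for q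
    using stabHP_torusT_finite[OF nu_in_Wspace[OF B_ker that(1)] that] .
  have "finite (stabHP k q (G_S k u))" if P: "inP k B q" for q
  proof (cases "nu_W_tensor k t q")
    case True
    then show ?thesis
      using stabHP_G_S_finite_if_tensor[OF cyc_indep trange tmono P] by blast
  next
    case False
    show ?thesis
      using finite_subset[OF stabHP_mono[OF G_S_subset_torusT] torus[OF P False]] .
  qed
  with torus show ?thesis
    by blast
qed

end
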